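(* Let $p,q,p',q'$ be primes. In the algebra $(\mathbb N,\cdot,\mathbb N)$, $$p:q::_m p':q'\iff (p=q\text{ and }p'=q')\ \text{or}\ (p=p'\text{ and }q=q').$$
   Context: $(\mathbb N,\cdot,\mathbb N)$ is the algebra with universe the natural numbers $\mathbb N$, multiplication, and every natural number as a constant. A justification is a pair of terms $s\to t$ with the variables of $t$ among those of $s$; monolinear justifications are those where $s,t$ contain only one fixed variable $x$, occurring at most once in $s$ and at most once in $t$. $\uparrow^m(a\to b)$ is the set of monolinear justifications $s\to t$ with $a=s(\mathbf o)$, $b=t(\mathbf o)$ for some value $\mathbf o$; $\uparrow^m(a\to b:\!\cdot\,c\to d):=\uparrow^m(a\to b)\cap\uparrow^m(c\to d)$. A monolinear justification is trivial if it lies in all sets $\uparrow^m(a'\to b':\!\cdot\,c'\to d')$. $a\to b:\!\cdot_m\,c\to d$ holds iff either (i) all justifications in $\uparrow^m(a\to b)\cup\uparrow^m(c\to d)$ are trivial, or (ii) $J_d:=\uparrow^m(a\to b:\!\cdot\,c\to d)$ contains a non-trivial justification and for every $d'$, $J_d\subseteq J_{d'}$ implies $J_{d'}$ contains a non-trivial justification and $J_{d'}\subseteq J_d$ (ignoring trivial justifications). $a:b::_m c:d$ iff $a\to b:\!\cdot_m\,c\to d$, $b\to a:\!\cdot_m\,d\to c$, $c\to d:\!\cdot_m\,a\to b$, $d\to c:\!\cdot_m\,b\to a$ all hold. *)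

theory Defs
  imports "HOL-Computational_Algebra.Primes"
begin

text \<open>Terms of the algebra (N, *, N) in the single fixed variable x:
  the variable, a constant for every natural number, and products.\<close>
datatype mterm = X | C nat | M mterm mterm

fun occ :: "mterm \<Rightarrow> nat" where
  "occ X = 1"
| "occ (C n) = 0"
| "occ (M s t) = occ s + occ t"

fun eval :: "mterm \<Rightarrow> nat \<Rightarrow> nat" where
  "eval X v = v"
| "eval (C n) v = n"
| "eval (M s t) v = eval s v * eval t v"

type_synonym just = "mterm \<times> mterm"

definition monolinear :: "just \<Rightarrow> bool" where
  "monolinear j \<longleftrightarrow> occ (fst j) \<le> 1 \<and> occ (snd j) \<le> 1 \<and>
     (occ (snd j) > 0 \<longrightarrow> occ (fst j) > 0)"

definition up :: "nat \<Rightarrow> nat \<Rightarrow> just set" where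
  "up a b = {j. monolinear j \<and> (\<exists>v. eval (fst j) v = a \<and> eval (snd j) v = b)}"

definition up2 :: "nat \<Rightarrow> nat \<Rightarrow> nat \<Rightarrow> nat \<Rightarrow> just set" where
  "up2 a b c d = up a b \<inter> up c d"

definition trivial_just :: "just \<Rightarrow> bool" where
  "trivial_just j \<longleftrightarrow> monolinear j \<and> (\<forall>a' b' c' d'. j \<in> up2 a' b' c' d')"

definition nontriv :: "just set \<Rightarrow> just set" where
  "nontriv S = {j \<in> S. \<not> trivial_just j}"

definition dir_prop_m :: "nat \<Rightarrow> nat \<Rightarrow> nat \<Rightarrow> nat \<Rightarrow> bool" where
  "dir_prop_m a b c d \<longleftrightarrow>
     (\<forall>j \<in> up a b \<union> up c d. trivial_just j) \<or>
     (nontriv (up2 a b c d) \<noteq> {} \<and>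
      (\<forall>d'. nontriv (up2 a b c d) \<subseteq> nontriv (up2 a b c d') \<longrightarrow>
            nontriv (up2 a b c d') \<noteq> {} \<and> nontriv (up2 a b c d') \<subseteq> nontriv (up2 a b c d)))"

definition analogy_m :: "nat \<Rightarrow> nat \<Rightarrow> nat \<Rightarrow> nat \<Rightarrow> bool" where
  "analogy_m a b c d \<longleftrightarrow> dir_prop_m a b c d \<and> dir_prop_m b a d c \<and>
     dir_prop_m c d a b \<and> dir_prop_m d c b a"

end

theory Submission
  imports Defs
begin

text \<open>A constant justification \<open>C a \<rightarrow> C b\<close> is never trivial, so \<open>a \<rightarrow> b :\<cdot>\<^sub>m c \<rightarrow> d\<close>
  forces a common monolinear justification \<open>s \<rightarrow> t\<close> of \<open>a \<rightarrow> b\<close> and \<open>c \<rightarrow> d\<close>.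
  Either \<open>t\<close> is constant, whence \<open>b = d\<close>, or \<open>s\<close> and \<open>t\<close> act as \<open>v \<mapsto> k v\<close> and
  \<open>v \<mapsto> l v\<close>; for primes \<open>a = k v\<^sub>1\<close>, \<open>b = l v\<^sub>1\<close>, \<open>c = k v\<^sub>2\<close> this leaves only
  \<open>a = b \<and> c = d\<close> or \<open>b = d\<close>. Applied to two of the four directions this gives
  the forward implication. Conversely, \<open>x \<rightarrow> x\<close> and \<open>C a \<rightarrow> C b\<close> are non-trivial
  justifications that determine the fourth term, which yields \<open>a : a :: c : c\<close>
  and \<open>a : b :: a : b\<close>.\<close>

lemma eval_indep_if_occ_0: "occ s = 0 \<Longrightarrow> eval s v = eval s w"
  by (induction s) auto

lemma eval_eq_mult_if_occ_1: "occ s = 1 \<Longrightarrow> eval s v = eval s 1 * v"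
proof (induction s)
  case (M s t)
  then consider "occ s = 0" "occ t = 1" | "occ s = 1" "occ t = 0" by force
  then show ?case
    by cases (use M eval_indep_if_occ_0[of s v 1] eval_indep_if_occ_0[of t v 1] in simp_all)
qed auto

lemma var_just_in_up_iff: "(X, X) \<in> up a b \<longleftrightarrow> a = b"
  unfolding up_def monolinear_def by auto

lemma const_just_in_up_iff: "(C a, C b) \<in> up a' b' \<longleftrightarrow> a' = a \<and> b' = b"
  unfolding up_def monolinear_def by auto

lemma var_just_not_trivial: "\<not> trivial_just (X, X)"
  unfolding trivial_just_def up2_def by (metis IntD1 var_just_in_up_iff zero_neq_one)

lemma const_just_not_trivial: "\<not> trivial_just (C a, C b)"
  unfolding trivial_just_def up2_def by (metis IntD1 const_just_in_up_iff n_not_Suc_n)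

lemma up2_nonempty_if_dir_prop_m:
  assumes "dir_prop_m a b c d"
  shows "up2 a b c d \<noteq> {}"
proof -
  have "\<not> (\<forall>j \<in> up a b \<union> up c d. trivial_just j)"
    using const_just_in_up_iff const_just_not_trivial by blast
  then show ?thesis
    using assms unfolding dir_prop_m_def nontriv_def by auto
qed

lemma common_just_of_primes:
  assumes "up2 a b c d \<noteq> {}" and "prime a" "prime b" "prime c"
  shows "b = d \<or> (a = b \<and> c = d)"
proof -
  obtain s t v\<^sub>1 v\<^sub>2 where mono: "monolinear (s, t)"
    and vals: "eval s v\<^sub>1 = a" "eval t v\<^sub>1 = b" "eval s v\<^sub>2 = c" "eval t v\<^sub>2 = d"
    using assms(1) unfolding up2_def up_def by force
  show ?thesis
  proof (cases "occ t = 0")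
    case True
    then show ?thesis
      using vals eval_indep_if_occ_0 by metis
  next
    case False
    with mono have "occ s = 1" "occ t = 1"
      unfolding monolinear_def by auto
    then obtain k l where lin: "a = k * v\<^sub>1" "b = l * v\<^sub>1" "c = k * v\<^sub>2" "d = l * v\<^sub>2"
      using vals eval_eq_mult_if_occ_1 by metis
    have "a \<noteq> 1" "b \<noteq> 1" "c \<noteq> 1"
      using assms(2-4) by auto
    from \<open>prime a\<close> lin(1) consider "k = 1" | "v\<^sub>1 = 1"
      using prime_product by blast
    then show ?thesis
    proof cases
      case 1
      with \<open>prime b\<close> lin(2) \<open>a \<noteq> 1\<close> have "l = 1"
        using lin(1) prime_product by auto
      with 1 lin show ?thesis by simp
    next
      case 2
      with \<open>prime c\<close> lin(3) \<open>a \<noteq> 1\<close> have "v\<^sub>2 = 1"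
        using lin(1) prime_product by auto
      with 2 lin show ?thesis by simp
    qed
  qed
qed

lemma dir_prop_m_if_determining_just:
  assumes "j \<in> up2 a b c d" "\<not> trivial_just j"
    and "\<And>d'. j \<in> up c d' \<Longrightarrow> d' = d"
  shows "dir_prop_m a b c d"
proof -
  have "j \<in> nontriv (up2 a b c d)"
    using assms(1,2) unfolding nontriv_def by simp
  moreover have "d' = d" if "nontriv (up2 a b c d) \<subseteq> nontriv (up2 a b c d')" for d'
    using assms(3) that calculation unfolding nontriv_def up2_def by blast
  ultimately show ?thesis
    unfolding dir_prop_m_def by blast
qed

lemma dir_prop_m_equal_pairs: "dir_prop_m a a c c"
  by (rule dir_prop_m_if_determining_just[of "(X, X)"])
    (simp_all add: up2_def var_just_in_up_iff var_just_not_trivial)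

lemma dir_prop_m_same_pair: "dir_prop_m a b a b"
  by (rule dir_prop_m_if_determining_just[of "(C a, C b)"])
    (simp_all add: up2_def const_just_in_up_iff const_just_not_trivial)

theorem mainTheorem10:
  fixes p q p' q' :: nat
  assumes "prime p" "prime q" "prime p'" "prime q'"
  shows "analogy_m p q p' q' \<longleftrightarrow> (p = q \<and> p' = q') \<or> (p = p' \<and> q = q')"
proof
  assume "analogy_m p q p' q'"
  then have "up2 p q p' q' \<noteq> {}" "up2 q p q' p' \<noteq> {}"
    unfolding analogy_m_def by (auto dest: up2_nonempty_if_dir_prop_m)
  then have "q = q' \<or> (p = q \<and> p' = q')" "p = p' \<or> (q = p \<and> q' = p')"
    using common_just_of_primes assms by blast+
  then show "(p = q \<and> p' = q') \<or> (p = p' \<and> q = q')" by auto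
next
  assume "(p = q \<and> p' = q') \<or> (p = p' \<and> q = q')"
  then show "analogy_m p q p' q'"
    unfolding analogy_m_def using dir_prop_m_equal_pairs dir_prop_m_same_pair by auto
qed

end
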